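(* Let $L\subseteq\mathbb{Z}^{(\mathbb{N})}$ be a $\mathrm{Sym}$-invariant lattice, and suppose $\mathcal{H}$ is a finite equivariant Hilbert basis of the monoid $M=L\cap\mathbb{Z}_{\ge0}^{(\mathbb{N})}$. Let $g_L=\gcd(u_i\mid\mathbf{u}=(u_i)_{i\in\mathbb{N}}\in L,\ i\in\mathbb{N})$ and $\mathbf{g}_L=g_L(\mathbf{e}_1-\mathbf{e}_2)$. Then $L$ has a finite equivariant Graver basis $\mathcal{G}$ with $\pm\mathcal{H}\subseteq\mathcal{G}\subseteq\pm\mathcal{H}\cup\{\pm\mathbf{g}_L\}$.
   Context: $\mathbb{N}=\{1,2,\dots\}$. $\mathbb{Z}^{(\mathbb{N})}$ is the group of finitely supported integer sequences with standard basis $\mathbf{e}_i$, $\mathbb{Z}_{\ge0}^{(\mathbb{N})}$ its nonnegative elements; a lattice is a subgroup. $\mathrm{Sym}$ is the group of permutations of $\mathbb{N}$ fixing all but finitely many points, acting by $\sigma(\mathbf{e}_i)=\mathbf{e}_{\sigma(i)}$. With $\mathbf{u}\sqsubseteq\mathbf{v}$ iff $u_iv_i\ge0$ and $|u_i|\le|v_i|$ for all $i$, the Graver basis of $L$ is the set of $\sqsubseteq$-minimal elements of $L\setminus\{\mathbf{0}\}$; $\mathcal{G}$ is an equivariant Graver basis if $\mathrm{Sym}(\mathcal{G})=\{\sigma(\mathbf{g})\mid\sigma\in\mathrm{Sym},\mathbf{g}\in\mathcal{G}\}$ is the Graver basis. A Hilbert basis of a monoid is a minimal generating set (w.r.t.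 $\mathbb{Z}_{\ge0}$-combinations); $\mathcal{H}$ is an equivariant Hilbert basis of a $\mathrm{Sym}$-invariant monoid $M$ if $\mathrm{Sym}(\mathcal{H})$ is a Hilbert basis of $M$. $\pm A=A\cup(-A)$. *)

theory Defs
  imports Main "HOL-Library.Function_Algebras"
begin

text \<open>Elements of Z^(N) (N = {1,2,...}) are represented as functions nat => int
  with finite support contained in {1,2,...} (value 0 at index 0).\<close>

definition fsupp :: "(nat \<Rightarrow> int) set" where
  "fsupp = {u. finite {i. u i \<noteq> 0} \<and> u 0 = 0}"

definition nonneg_fsupp :: "(nat \<Rightarrow> int) set" where
  "nonneg_fsupp = {u \<in> fsupp. \<forall>i. u i \<ge> 0}"

definition unitvec :: "nat \<Rightarrow> nat \<Rightarrow> int" ("\<e>") where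
  "unitvec i = (\<lambda>j. if j = i then 1 else 0)"

definition is_lattice :: "(nat \<Rightarrow> int) set \<Rightarrow> bool" where
  "is_lattice L \<longleftrightarrow> L \<subseteq> fsupp \<and> 0 \<in> L \<and>
     (\<forall>u\<in>L. \<forall>v\<in>L. u + v \<in> L) \<and> (\<forall>u\<in>L. - u \<in> L)"

definition Sym :: "(nat \<Rightarrow> nat) set" where
  "Sym = {\<sigma>. bij \<sigma> \<and> \<sigma> 0 = 0 \<and> finite {i. \<sigma> i \<noteq> i}}"

text \<open>Action sigma(e_i) = e_(sigma i), i.e. (sigma u)(sigma i) = u i.\<close>
definition act :: "(nat \<Rightarrow> nat) \<Rightarrow> (nat \<Rightarrow> int) \<Rightarrow> (nat \<Rightarrow> int)" where
  "act \<sigma> u = u \<circ> inv \<sigma>"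

definition sym_invariant :: "(nat \<Rightarrow> int) set \<Rightarrow> bool" where
  "sym_invariant A \<longleftrightarrow> (\<forall>\<sigma>\<in>Sym. \<forall>u\<in>A. act \<sigma> u \<in> A)"

definition orbit :: "(nat \<Rightarrow> int) set \<Rightarrow> (nat \<Rightarrow> int) set" where
  "orbit A = {act \<sigma> g | \<sigma> g. \<sigma> \<in> Sym \<and> g \<in> A}"

definition conformal :: "(nat \<Rightarrow> int) \<Rightarrow> (nat \<Rightarrow> int) \<Rightarrow> bool" (infix "\<sqsubseteq>" 50) where
  "u \<sqsubseteq> v \<longleftrightarrow> (\<forall>i. u i * v i \<ge> 0 \<and> \<bar>u i\<bar> \<le> \<bar>v i\<bar>)"

definition graver_basis :: "(nat \<Rightarrow> int) set \<Rightarrow> (nat \<Rightarrow> int) set" where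
  "graver_basis L = {u \<in> L - {0}. \<forall>v \<in> L - {0}. v \<sqsubseteq> u \<longrightarrow> v = u}"

definition equivariant_graver_basis :: "(nat \<Rightarrow> int) set \<Rightarrow> (nat \<Rightarrow> int) set \<Rightarrow> bool" where
  "equivariant_graver_basis L G \<longleftrightarrow> orbit G = graver_basis L"

inductive_set gen_monoid :: "(nat \<Rightarrow> int) set \<Rightarrow> (nat \<Rightarrow> int) set" for S where
  zero: "0 \<in> gen_monoid S"
| add: "s \<in> S \<Longrightarrow> x \<in> gen_monoid S \<Longrightarrow> s + x \<in> gen_monoid S"

definition hilbert_basis :: "(nat \<Rightarrow> int) set \<Rightarrow> (nat \<Rightarrow> int) set \<Rightarrow> bool" where
  "hilbert_basis M H \<longleftrightarrow> gen_monoid H = M \<and> (\<forall>h\<in>H. gen_monoid (H - {h}) \<noteq> M)"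

definition equivariant_hilbert_basis :: "(nat \<Rightarrow> int) set \<Rightarrow> (nat \<Rightarrow> int) set \<Rightarrow> bool" where
  "equivariant_hilbert_basis M H \<longleftrightarrow> hilbert_basis M (orbit H)"

definition pm :: "(nat \<Rightarrow> int) set \<Rightarrow> (nat \<Rightarrow> int) set" where
  "pm A = A \<union> uminus ` A"

definition gcd_lattice :: "(nat \<Rightarrow> int) set \<Rightarrow> int" where
  "gcd_lattice L = Gcd {u i | u i. u \<in> L \<and> i \<ge> 1}"

definition gvec_lattice :: "(nat \<Rightarrow> int) set \<Rightarrow> (nat \<Rightarrow> int)" where
  "gvec_lattice L = (\<lambda>i. gcd_lattice L * (\<e> 1 i - \<e> 2 i))"

end

(*
  Elements of the Hilbert basis of M = L \<inter> Z_{\<ge>0} cannot be split inside M, so they are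
  conformally minimal in L; conversely a nonnegative Graver element is a sum of Hilbert basis
  elements, each conformal to it, so it is one of them. Nonpositive Graver elements are handled
  by negation. A Graver element u with u_i > 0 > u_j dominates g_L (e_i - e_j), which lies in L
  because Sym lets every coordinate c of an element of L be realised as c (e_i - e_j), and the
  integers c with c (e_i - e_j) \<in> L form a group containing g_L. So u = g_L (e_i - e_j), a
  permuted copy of g_L (e_1 - e_2); such elements occur exactly when g_L e_1 \<notin> L.
*)
theory Submission
  imports Defs "HOL-Combinatorics.Transposition" "HOL-Computational_Algebra.Group_Closure"
begin

lemma Sym_comp:
  assumes "\<sigma> \<in> Sym" "\<tau> \<in> Sym"
  shows "\<sigma> \<circ> \<tau> \<in> Sym"
proof -
  have "{i. (\<sigma> \<circ> \<tau>) i \<noteq> i} \<subseteq> {i. \<tau> i \<noteq> i} \<union> {i. \<sigma> i \<noteq> i}" by auto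
  with assms show ?thesis
    unfolding Sym_def by (auto intro: bij_comp finite_subset)
qed

lemma Sym_inv:
  assumes "\<sigma> \<in> Sym"
  shows "inv \<sigma> \<in> Sym"
proof -
  have \<sigma>: "bij \<sigma>" "\<sigma> 0 = 0" "finite {i. \<sigma> i \<noteq> i}" using assms by (auto simp: Sym_def)
  have "{i. inv \<sigma> i \<noteq> i} \<subseteq> {i. \<sigma> i \<noteq> i}"
    using \<sigma>(1) by (auto simp: bij_is_inj inv_f_eq)
  with \<sigma> show ?thesis
    by (auto simp: Sym_def bij_imp_bij_inv bij_is_inj inv_f_eq intro: finite_subset)
qed

lemma id_in_Sym: "id \<in> Sym"
  by (simp add: Sym_def)

lemma transpose_in_Sym:
  assumes "a \<ge> 1" "b \<ge> 1"
  shows "transpose a b \<in> Sym"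
proof -
  have "{i. transpose a b i \<noteq> i} \<subseteq> {a, b}" by (auto simp: transpose_def)
  with assms show ?thesis
    unfolding Sym_def by (auto simp: transpose_def intro: finite_subset)
qed

lemma Sym_pair_transitive:
  assumes "a \<ge> 1" "b \<ge> 1" "i \<ge> 1" "j \<ge> 1" "a \<noteq> b" "i \<noteq> j"
  shows "\<exists>\<sigma>\<in>Sym. \<sigma> a = i \<and> \<sigma> b = j"
proof -
  define b' where "b' = transpose a i b"
  have b': "b' \<ge> 1" "b' \<noteq> i" using assms by (auto simp: b'_def transpose_def)
  define \<sigma> where "\<sigma> = transpose b' j \<circ> transpose a i"
  have "\<sigma> \<in> Sym" unfolding \<sigma>_def using assms b' by (intro Sym_comp transpose_in_Sym)
  moreover have "\<sigma> a = i" using assms b' by (simp add: \<sigma>_def transpose_def)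
  moreover have "\<sigma> b = j" by (simp add: \<sigma>_def flip: b'_def)
  ultimately show ?thesis by blast
qed

lemma act_apply: "bij \<sigma> \<Longrightarrow> act \<sigma> u (\<sigma> i) = u i"
  by (simp add: act_def bij_is_inj)

lemma act_act_inv: "bij \<sigma> \<Longrightarrow> act \<sigma> (act (inv \<sigma>) u) = u"
  by (rule ext) (simp add: act_def inv_inv_eq bij_is_surj surj_f_inv_f)

lemma act_inv_act: "bij \<sigma> \<Longrightarrow> act (inv \<sigma>) (act \<sigma> u) = u"
  by (simp add: act_def inv_inv_eq o_assoc bij_is_inj)

lemma act_zero: "act \<sigma> 0 = 0"
  by (rule ext) (simp add: act_def)

lemma act_uminus: "act \<sigma> (- u) = - act \<sigma> u"
  by (rule ext) (simp add: act_def)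

lemma unitvec_inv_apply: "bij \<sigma> \<Longrightarrow> \<e> a (inv \<sigma> t) = \<e> (\<sigma> a) t"
  by (simp add: unitvec_def bij_inv_eq_iff eq_commute)

lemma act_scaled_unitvec: "bij \<sigma> \<Longrightarrow> act \<sigma> (\<lambda>t. c * \<e> a t) = (\<lambda>t. c * \<e> (\<sigma> a) t)"
  by (simp add: act_def comp_def unitvec_inv_apply)

lemma act_scaled_unitvec_diff:
  "bij \<sigma> \<Longrightarrow> act \<sigma> (\<lambda>t. c * (\<e> a t - \<e> b t)) = (\<lambda>t. c * (\<e> (\<sigma> a) t - \<e> (\<sigma> b) t))"
  by (simp add: act_def comp_def unitvec_inv_apply)

lemma conformal_act_iff: "bij \<sigma> \<Longrightarrow> act \<sigma> v \<sqsubseteq> act \<sigma> u \<longleftrightarrow> v \<sqsubseteq> u"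
  unfolding conformal_def by (metis act_apply bij_inv_eq_iff act_def comp_apply)

lemma conformal_uminus_iff: "- v \<sqsubseteq> - u \<longleftrightarrow> v \<sqsubseteq> u"
  by (simp add: conformal_def)

lemma lattice_diff: "is_lattice L \<Longrightarrow> u \<in> L \<Longrightarrow> v \<in> L \<Longrightarrow> u - v \<in> L"
  unfolding is_lattice_def by (metis diff_conv_add_uminus)

lemma lattice_apply_zero: "is_lattice L \<Longrightarrow> u \<in> L \<Longrightarrow> u 0 = 0"
  by (auto simp: is_lattice_def fsupp_def)

lemma lattice_support_pos: "is_lattice L \<Longrightarrow> u \<in> L \<Longrightarrow> u i \<noteq> 0 \<Longrightarrow> i \<ge> 1"
  by (cases i) (auto dest: lattice_apply_zero)

lemma sym_invariantD: "sym_invariant A \<Longrightarrow> \<sigma> \<in> Sym \<Longrightarrow> u \<in> A \<Longrightarrow> act \<sigma> u \<in> A"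
  by (simp add: sym_invariant_def)

lemma gcd_lattice_dvd:
  assumes "is_lattice L" "u \<in> L"
  shows "gcd_lattice L dvd u i"
proof (cases "i = 0")
  case False
  hence "u i \<in> {u i | u i. u \<in> L \<and> i \<ge> 1}" using assms(2) by (auto intro!: exI[of _ i])
  thus ?thesis unfolding gcd_lattice_def by (rule Gcd_dvd)
qed (use lattice_apply_zero[OF assms] in simp)

lemma scaled_unitvec_in_lattice_transfer:
  assumes "sym_invariant L" "a \<ge> 1" "b \<ge> 1" "(\<lambda>t. c * \<e> a t) \<in> L"
  shows "(\<lambda>t. c * \<e> b t) \<in> L"
proof -
  have "act (transpose a b) (\<lambda>t. c * \<e> a t) \<in> L"
    using assms by (intro sym_invariantD transpose_in_Sym)
  thus ?thesis by (simp add: act_scaled_unitvec)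
qed

lemma coordinate_multiple_in_lattice:
  assumes lat: "is_lattice L" and si: "sym_invariant L" and u: "u \<in> L"
    and "p \<ge> 1" "i \<ge> 1" "j \<ge> 1" "i \<noteq> j"
  shows "(\<lambda>t. u p * (\<e> i t - \<e> j t)) \<in> L"
proof -
  have "finite ({0, p} \<union> {k. u k \<noteq> 0})"
    using u lat by (auto simp: is_lattice_def fsupp_def)
  then obtain q where q: "q \<notin> {0, p} \<union> {k. u k \<noteq> 0}"
    using ex_new_if_finite[OF infinite_UNIV_nat] by blast
  \<comment> \<open>Swapping coordinate p with a coordinate q outside the support of u isolates u p.\<close>
  have "u - act (transpose p q) u \<in> L"
    using assms q by (intro lattice_diff sym_invariantD transpose_in_Sym) auto
  moreover have "u - act (transpose p q) u = (\<lambda>t. u p * (\<e> p t - \<e> q t))"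
    using q by (auto simp: fun_eq_iff act_def transpose_def unitvec_def)
  moreover obtain \<sigma> where \<sigma>: "\<sigma> \<in> Sym" "\<sigma> p = i" "\<sigma> q = j"
    using Sym_pair_transitive[of p q i j] assms q by auto
  ultimately have "act \<sigma> (\<lambda>t. u p * (\<e> p t - \<e> q t)) \<in> L"
    using si by (simp add: sym_invariantD)
  with \<sigma> show ?thesis by (simp add: Sym_def act_scaled_unitvec_diff)
qed

lemma gcd_lattice_multiple_in_lattice:
  assumes lat: "is_lattice L" and si: "sym_invariant L"
    and ij: "i \<ge> 1" "j \<ge> 1" "i \<noteq> j"
  shows "(\<lambda>t. gcd_lattice L * (\<e> i t - \<e> j t)) \<in> L"
proof -
  define I where "I = {k. (\<lambda>t. k * (\<e> i t - \<e> j t)) \<in> L}"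
  have "group_closure {u p | u p. u \<in> L \<and> p \<ge> 1} \<subseteq> I"
  proof
    fix k assume "k \<in> group_closure {u p | u p. u \<in> L \<and> p \<ge> 1}"
    thus "k \<in> I"
    proof induction
      case (base s)
      moreover have "(\<lambda>t. 0 * (\<e> i t - \<e> j t)) \<in> L"
        using lat by (simp add: is_lattice_def zero_fun_def)
      ultimately show ?case
        using coordinate_multiple_in_lattice[OF lat si _ _ ij] by (auto simp: I_def)
    next
      case (diff s t)
      hence "(\<lambda>x. s * (\<e> i x - \<e> j x)) - (\<lambda>x. t * (\<e> i x - \<e> j x)) \<in> L"
        using lat by (simp add: I_def lattice_diff)
      thus ?case by (simp add: I_def fun_diff_def left_diff_distrib)
    qed
  qed
  with Gcd_in_group_closure show ?thesis
    unfolding gcd_lattice_def I_def by blast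
qed

section \<open>Graver bases and Hilbert bases\<close>

lemma graver_basis_closed_conformal_bij:
  assumes u: "u \<in> graver_basis L"
    and maps: "\<And>x. x \<in> L \<Longrightarrow> f x \<in> L" "\<And>x. x \<in> L \<Longrightarrow> f' x \<in> L"
    and inverse: "\<And>x. f (f' x) = x" "\<And>x. f' (f x) = x"
    and conformal: "\<And>x y. f x \<sqsubseteq> f y \<longleftrightarrow> x \<sqsubseteq> y" and zero: "f 0 = 0"
  shows "f u \<in> graver_basis L"
proof -
  have "v = f u" if "v \<in> L" "v \<noteq> 0" "v \<sqsubseteq> f u" for v
  proof -
    have "f' v \<in> L" using maps(2) that(1) .
    moreover have "f' v \<noteq> 0" using that(2) zero inverse(1)[of v] by auto
    moreover have "f' v \<sqsubseteq> u" using that(3) conformal[of "f' v" u] by (simp add: inverse(1))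
    ultimately have "f' v = u" using u by (auto simp: graver_basis_def)
    thus ?thesis using inverse(1)[of v] by simp
  qed
  moreover have "f u \<noteq> 0" using u zero inverse(2)[of u] inverse(2)[of 0] by (auto simp: graver_basis_def)
  moreover have "f u \<in> L" using u maps(1) by (simp add: graver_basis_def)
  ultimately show ?thesis by (simp add: graver_basis_def)
qed

lemma graver_basis_uminus:
  assumes "is_lattice L" "u \<in> graver_basis L"
  shows "- u \<in> graver_basis L"
  using assms(2) by (rule graver_basis_closed_conformal_bij[where f = uminus and f' = uminus])
    (use assms(1) in \<open>simp_all add: is_lattice_def conformal_uminus_iff\<close>)

lemma sym_invariant_graver_basis:
  assumes "sym_invariant L"
  shows "sym_invariant (graver_basis L)"
  unfolding sym_invariant_def
proof (intro ballI)
  fix \<sigma> u assume \<sigma>: "\<sigma> \<in> Sym" and u: "u \<in> graver_basis L"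
  have "bij \<sigma>" using \<sigma> by (simp add: Sym_def)
  from u show "act \<sigma> u \<in> graver_basis L"
    by (rule graver_basis_closed_conformal_bij[where f = "act \<sigma>" and f' = "act (inv \<sigma>)"])
      (use assms \<sigma> \<open>bij \<sigma>\<close> in \<open>simp_all add: sym_invariantD Sym_inv act_act_inv act_inv_act
         conformal_act_iff act_zero\<close>)
qed

lemma gen_monoid_base: "b \<in> B \<Longrightarrow> b \<in> gen_monoid B"
  using gen_monoid.add[OF _ gen_monoid.zero] by simp

lemma gen_monoid_add: "x \<in> gen_monoid B \<Longrightarrow> y \<in> gen_monoid B \<Longrightarrow> x + y \<in> gen_monoid B"
  by (induction x rule: gen_monoid.induct) (simp_all add: add.assoc gen_monoid.add)

lemma gen_monoid_mono:
  assumes "A \<subseteq> B"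
  shows "gen_monoid A \<subseteq> gen_monoid B"
proof
  fix x assume "x \<in> gen_monoid A"
  thus "x \<in> gen_monoid B"
  proof (induction x rule: gen_monoid.induct)
    case (add s x)
    thus ?case using assms by (blast intro: gen_monoid.add)
  qed (rule gen_monoid.zero)
qed

lemma gen_monoid_nonneg:
  assumes "\<forall>b\<in>B. \<forall>i. 0 \<le> b i" and "x \<in> gen_monoid B"
  shows "0 \<le> x i"
  using assms(2) by (induction x rule: gen_monoid.induct) (simp_all add: assms(1) add_nonneg_nonneg)

lemma gen_monoid_Diff_absorb:
  assumes "h \<in> gen_monoid (B - {h})"
  shows "gen_monoid (B - {h}) = gen_monoid B"
proof
  show "gen_monoid B \<subseteq> gen_monoid (B - {h})"
  proof
    fix x assume "x \<in> gen_monoid B"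
    thus "x \<in> gen_monoid (B - {h})"
    proof (induction x rule: gen_monoid.induct)
      case (add s x)
      show ?case
      proof (cases "s = h")
        case True
        show ?thesis unfolding True by (rule gen_monoid_add[OF assms add.IH])
      next
        case False
        with add show ?thesis by (blast intro: gen_monoid.add)
      qed
    qed (rule gen_monoid.zero)
  qed
qed (rule gen_monoid_mono, blast)

lemma gen_monoid_avoid:
  assumes nonneg: "\<forall>b\<in>B. \<forall>i. 0 \<le> b i"
  shows "x \<in> gen_monoid B \<Longrightarrow> \<not> (\<forall>i. h i \<le> x i) \<Longrightarrow> x \<in> gen_monoid (B - {h})"
proof (induction x rule: gen_monoid.induct)
  case (add s y)
  have "0 \<le> s i" "0 \<le> y i" for i
    using add.hyps nonneg gen_monoid_nonneg[OF nonneg] by blast+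
  hence "s \<noteq> h" "\<not> (\<forall>i. h i \<le> y i)"
    using add.prems by (metis add_increasing2 plus_fun_apply order_refl, metis add_increasing plus_fun_apply)
  with add show ?case by (blast intro: gen_monoid.add)
qed (rule gen_monoid.zero)

lemma hilbert_basis_not_redundant:
  assumes "hilbert_basis M B" "b \<in> B"
  shows "b \<notin> gen_monoid (B - {b})"
proof
  assume "b \<in> gen_monoid (B - {b})"
  hence "gen_monoid (B - {b}) = gen_monoid B" by (rule gen_monoid_Diff_absorb)
  thus False using assms by (simp add: hilbert_basis_def)
qed

lemma hilbert_basis_irreducible:
  assumes hb: "hilbert_basis M B" and nonneg: "\<And>x i. x \<in> M \<Longrightarrow> 0 \<le> x i"
    and b: "b \<in> B" and "x \<in> M" "y \<in> M" "b = x + y"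
  shows "x = 0 \<or> y = 0"
proof (rule ccontr)
  assume nonzero: "\<not> (x = 0 \<or> y = 0)"
  have gm: "gen_monoid B = M" using hb by (simp add: hilbert_basis_def)
  have B_nonneg: "\<forall>b\<in>B. \<forall>i. 0 \<le> b i" using nonneg gen_monoid_base gm by blast
  have avoid: "z \<in> gen_monoid (B - {b})" if "z \<in> M" "w \<in> M" "b = z + w" "w \<noteq> 0" for z w
  proof -
    have "\<not> (\<forall>i. b i \<le> z i)"
    proof
      assume "\<forall>i. b i \<le> z i"
      moreover have "b i = z i + w i" for i using that(3) by simp
      ultimately have "w i \<le> 0" for i by (metis add_le_same_cancel1)
      hence "w = 0" using nonneg[OF that(2)] by (simp add: antisym fun_eq_iff)
      with that(4) show False ..
    qed
    thus ?thesis using gen_monoid_avoid[OF B_nonneg] that(1) gm by blast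
  qed
  have "x \<in> gen_monoid (B - {b})" using avoid[of x y] assms(4-6) nonzero by blast
  moreover have "y \<in> gen_monoid (B - {b})"
    using avoid[of y x] assms(4-6) nonzero by (simp add: add.commute)
  ultimately have "b \<in> gen_monoid (B - {b})" unfolding \<open>b = x + y\<close> by (rule gen_monoid_add)
  thus False using hilbert_basis_not_redundant[OF hb b] by contradiction
qed

lemma hilbert_basis_subset_graver_basis:
  assumes lat: "is_lattice L" and hb: "hilbert_basis (L \<inter> nonneg_fsupp) B"
  shows "B \<subseteq> graver_basis L"
proof
  fix b assume b: "b \<in> B"
  let ?M = "L \<inter> nonneg_fsupp"
  have bM: "b \<in> ?M" using hb b gen_monoid_base by (auto simp: hilbert_basis_def)
  have "b \<noteq> 0" using hilbert_basis_not_redundant[OF hb b] gen_monoid.zero by metis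
  moreover have "v = b" if v: "v \<in> L" "v \<noteq> 0" "v \<sqsubseteq> b" for v
  proof -
    have "0 \<le> v i \<and> v i \<le> b i" for i
    proof -
      have "0 \<le> v i * b i" "\<bar>v i\<bar> \<le> \<bar>b i\<bar>" "0 \<le> b i"
        using v(3) bM by (auto simp: conformal_def nonneg_fsupp_def)
      thus ?thesis by (cases "b i = 0") (auto simp: zero_le_mult_iff)
    qed
    moreover have "v \<in> fsupp" "b - v \<in> fsupp"
      using lat v(1) lattice_diff[OF lat _ v(1)] bM by (auto simp: is_lattice_def)
    ultimately have "v \<in> ?M" "b - v \<in> ?M"
      using v(1) lattice_diff[OF lat _ v(1)] bM by (auto simp: nonneg_fsupp_def)
    hence "v = 0 \<or> b - v = 0"
      by (intro hilbert_basis_irreducible[OF hb _ b]) (auto simp: nonneg_fsupp_def)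
    with v(2) show ?thesis by simp
  qed
  ultimately show "b \<in> graver_basis L" using bM by (auto simp: graver_basis_def)
qed

lemma graver_basis_nonneg_mem_hilbert_basis:
  assumes lat: "is_lattice L" and hb: "hilbert_basis (L \<inter> nonneg_fsupp) B"
    and u: "u \<in> graver_basis L" and nonneg: "\<And>i. 0 \<le> u i"
  shows "u \<in> B"
proof -
  have gm: "gen_monoid B = L \<inter> nonneg_fsupp" using hb by (simp add: hilbert_basis_def)
  have "u \<in> L \<inter> nonneg_fsupp"
    using u lat nonneg by (auto simp: graver_basis_def is_lattice_def nonneg_fsupp_def)
  hence "u \<in> gen_monoid B" using gm by simp
  then obtain s y where s: "s \<in> B" and y: "y \<in> gen_monoid B" and u_eq: "u = s + y"
    using u by (cases rule: gen_monoid.cases) (auto simp: graver_basis_def)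
  have "s \<in> graver_basis L" using hilbert_basis_subset_graver_basis[OF lat hb] s by blast
  moreover have "0 \<le> s i" "0 \<le> y i" for i
    using gen_monoid_base[OF s] y gm by (auto simp: nonneg_fsupp_def)
  hence "s \<sqsubseteq> u" by (auto simp: conformal_def u_eq)
  ultimately have "s = u" using u by (auto simp: graver_basis_def)
  with s show ?thesis by simp
qed

section \<open>Graver elements of mixed sign\<close>

lemma graver_basis_mixed_sign:
  assumes lat: "is_lattice L" and si: "sym_invariant L" and u: "u \<in> graver_basis L"
    and pos: "u i > 0" and neg: "u j < 0"
  shows "u = (\<lambda>t. gcd_lattice L * (\<e> i t - \<e> j t))"
proof -
  let ?g = "gcd_lattice L"
  have uL: "u \<in> L" using u by (simp add: graver_basis_def)
  have ij: "i \<ge> 1" "j \<ge> 1" "i \<noteq> j"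
    using pos neg lattice_support_pos[OF lat uL] by force+
  have dvd: "?g dvd u i" "?g dvd - u j" using gcd_lattice_dvd[OF lat uL] by simp_all
  have "?g \<noteq> 0" using dvd(1) pos by auto
  moreover have "0 \<le> ?g" by (simp add: gcd_lattice_def)
  ultimately have g: "0 < ?g" "?g \<le> u i" "?g \<le> - u j"
    using dvd pos neg by (simp_all add: zdvd_imp_le)
  let ?v = "\<lambda>t. ?g * (\<e> i t - \<e> j t)"
  have "?v \<in> L" using gcd_lattice_multiple_in_lattice[OF lat si ij] .
  moreover have "?v \<noteq> 0" using fun_cong[of ?v 0 i] g ij by (auto simp: unitvec_def)
  moreover have "?v \<sqsubseteq> u"
    using ij g pos neg by (auto simp: conformal_def unitvec_def mult_le_0_iff)
  ultimately show "u = ?v" using u by (auto simp: graver_basis_def)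
qed

lemma graver_basis_mixed_sign_scaled_unitvec_notin:
  assumes lat: "is_lattice L" and si: "sym_invariant L" and u: "u \<in> graver_basis L"
    and pos: "u i > 0" and neg: "u j < 0"
  shows "(\<lambda>t. gcd_lattice L * \<e> 1 t) \<notin> L"
proof
  let ?g = "gcd_lattice L" and ?v = "\<lambda>t. gcd_lattice L * \<e> i t"
  assume "(\<lambda>t. ?g * \<e> 1 t) \<in> L"
  have u_eq: "u = (\<lambda>t. ?g * (\<e> i t - \<e> j t))"
    using graver_basis_mixed_sign[OF lat si u pos neg] .
  have "i \<noteq> j" "i \<ge> 1"
    using pos neg lattice_support_pos[OF lat, of u] u by (force simp: graver_basis_def)+
  have "?g \<noteq> 0" using pos u_eq by auto
  have "?v \<in> L"
    using scaled_unitvec_in_lattice_transfer[OF si _ \<open>i \<ge> 1\<close> \<open>(\<lambda>t. ?g * \<e> 1 t) \<in> L\<close>] by simp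
  moreover have "?v \<noteq> 0"
  proof
    assume "?v = 0"
    from fun_cong[OF this, of i] \<open>?g \<noteq> 0\<close> show False by (simp add: unitvec_def)
  qed
  moreover have "?v \<sqsubseteq> u" using \<open>i \<noteq> j\<close> by (simp add: u_eq conformal_def unitvec_def)
  ultimately have "?v = u" using u by (auto simp: graver_basis_def)
  hence "u j = 0" using \<open>i \<noteq> j\<close> by (auto simp: unitvec_def)
  with neg show False by simp
qed

lemma graver_basis_mixed_sign_in_orbit:
  assumes lat: "is_lattice L" and si: "sym_invariant L" and u: "u \<in> graver_basis L"
    and pos: "u i > 0" and neg: "u j < 0"
  shows "u \<in> orbit {gvec_lattice L}"
proof -
  have "i \<ge> 1" "j \<ge> 1" "i \<noteq> j"
    using pos neg lattice_support_pos[OF lat, of u] u by (force simp: graver_basis_def)+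
  then obtain \<sigma> where \<sigma>: "\<sigma> \<in> Sym" "\<sigma> 1 = i" "\<sigma> 2 = j"
    using Sym_pair_transitive[of 1 2 i j] by auto
  hence "act \<sigma> (gvec_lattice L) = u"
    using graver_basis_mixed_sign[OF assms]
    by (simp add: gvec_lattice_def act_scaled_unitvec_diff Sym_def)
  with \<sigma>(1) show ?thesis by (auto simp: orbit_def)
qed

lemma int_conformal_dvd_cases:
  fixes x y g :: int
  assumes "0 \<le> x * y" "\<bar>x\<bar> \<le> \<bar>y\<bar>" "g dvd x" "\<bar>y\<bar> \<le> \<bar>g\<bar>"
  shows "x = 0 \<or> x = y"
proof (cases "x = 0")
  case False
  hence "\<bar>x\<bar> = \<bar>y\<bar>" using assms dvd_imp_le_int[of x g] by linarith
  with False assms(1) show ?thesis by (auto simp: abs_if zero_le_mult_iff split: if_splits)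
qed simp

lemma gvec_lattice_in_graver_basis:
  assumes lat: "is_lattice L" and si: "sym_invariant L"
    and notin: "(\<lambda>t. gcd_lattice L * \<e> 1 t) \<notin> L"
  shows "gvec_lattice L \<in> graver_basis L"
proof -
  let ?g = "gcd_lattice L" and ?w = "gvec_lattice L"
  have w: "?w t = ?g * (\<e> 1 t - \<e> 2 t)" for t by (simp add: gvec_lattice_def)
  have "?g \<noteq> 0"
  proof
    assume "?g = 0"
    hence "(\<lambda>t. ?g * \<e> 1 t) = 0" by (simp add: zero_fun_def)
    with notin lat show False by (simp add: is_lattice_def)
  qed
  have "?w \<in> L"
    using gcd_lattice_multiple_in_lattice[OF lat si, of 1 2] by (simp add: gvec_lattice_def)
  moreover have "?w \<noteq> 0"
  proof
    assume "?w = 0"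
    from fun_cong[OF this, of 1] \<open>?g \<noteq> 0\<close> show False by (simp add: w unitvec_def)
  qed
  moreover have "v = ?w" if v: "v \<in> L" "v \<noteq> 0" "v \<sqsubseteq> ?w" for v
  proof -
    have agree: "v t = 0 \<or> v t = ?w t" for t
    proof (rule int_conformal_dvd_cases)
      show "0 \<le> v t * ?w t" "\<bar>v t\<bar> \<le> \<bar>?w t\<bar>" using v(3) by (simp_all add: conformal_def)
      show "?g dvd v t" using gcd_lattice_dvd[OF lat v(1)] .
      show "\<bar>?w t\<bar> \<le> \<bar>?g\<bar>" by (simp add: w unitvec_def abs_mult)
    qed
    have v_eq: "v = (\<lambda>t. v 1 * \<e> 1 t + v 2 * \<e> 2 t)"
    proof
      fix t show "v t = v 1 * \<e> 1 t + v 2 * \<e> 2 t"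
        using agree[of t] by (auto simp: w unitvec_def)
    qed
    have "v 1 \<noteq> 0"
    proof
      assume "v 1 = 0"
      hence "v 2 = - ?g" using agree[of 2] v(2) v_eq by (auto simp: w unitvec_def)
      hence "(\<lambda>t. ?g * \<e> 2 t) = - v" using \<open>v 1 = 0\<close> by (subst v_eq) (simp add: fun_eq_iff)
      hence "(\<lambda>t. ?g * \<e> 2 t) \<in> L" using lat v(1) by (simp add: is_lattice_def)
      with notin show False using scaled_unitvec_in_lattice_transfer[OF si, of 2 1] by simp
    qed
    hence v1: "v 1 = ?g" using agree[of 1] by (simp add: w unitvec_def)
    have "v 2 \<noteq> 0"
    proof
      assume "v 2 = 0"
      hence "v = (\<lambda>t. ?g * \<e> 1 t)" using v1 by (subst v_eq) (simp add: fun_eq_iff)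
      with notin v(1) show False by simp
    qed
    hence "v 2 = - ?g" using agree[of 2] by (simp add: w unitvec_def)
    with v1 show ?thesis by (subst v_eq) (simp add: fun_eq_iff w algebra_simps)
  qed
  ultimately show ?thesis by (auto simp: graver_basis_def)
qed

lemma subset_orbit: "A \<subseteq> orbit A"
  unfolding orbit_def using id_in_Sym by (force simp: act_def)

lemma orbit_mono: "A \<subseteq> B \<Longrightarrow> orbit A \<subseteq> orbit B"
  by (auto simp: orbit_def)

lemma orbit_subset_sym_invariant: "sym_invariant S \<Longrightarrow> A \<subseteq> S \<Longrightarrow> orbit A \<subseteq> S"
  by (auto simp: orbit_def sym_invariant_def)

lemma uminus_mem_orbit_uminus_image:
  assumes "x \<in> orbit A"
  shows "- x \<in> orbit (uminus ` A)"
proof -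
  obtain \<sigma> g where "\<sigma> \<in> Sym" "g \<in> A" "x = act \<sigma> g" using assms by (auto simp: orbit_def)
  moreover have "- act \<sigma> g = act \<sigma> (- g)" by (simp add: act_uminus)
  ultimately show ?thesis unfolding orbit_def by blast
qed

definition graver_generators :: "(nat \<Rightarrow> int) set \<Rightarrow> (nat \<Rightarrow> int) set \<Rightarrow> (nat \<Rightarrow> int) set" where
  "graver_generators L H =
     pm H \<union> (if (\<lambda>t. gcd_lattice L * \<e> 1 t) \<in> L then {} else pm {gvec_lattice L})"

lemma graver_generators_subset_graver_basis:
  assumes lat: "is_lattice L" and si: "sym_invariant L"
    and hb: "hilbert_basis (L \<inter> nonneg_fsupp) (orbit H)"
  shows "graver_generators L H \<subseteq> graver_basis L"
proof -
  have "H \<subseteq> graver_basis L"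
    using hilbert_basis_subset_graver_basis[OF lat hb] subset_orbit by blast
  moreover have "gvec_lattice L \<in> graver_basis L" if "(\<lambda>t. gcd_lattice L * \<e> 1 t) \<notin> L"
    using gvec_lattice_in_graver_basis[OF lat si that] .
  ultimately show ?thesis
    by (auto simp: graver_generators_def pm_def graver_basis_uminus[OF lat])
qed

lemma graver_basis_subset_orbit_graver_generators:
  assumes lat: "is_lattice L" and si: "sym_invariant L"
    and hb: "hilbert_basis (L \<inter> nonneg_fsupp) (orbit H)"
  shows "graver_basis L \<subseteq> orbit (graver_generators L H)"
proof
  fix u assume u: "u \<in> graver_basis L"
  consider "\<forall>i. 0 \<le> u i" | "\<forall>i. u i \<le> 0" | i j where "u i > 0" "u j < 0"
    by (meson not_le)
  then show "u \<in> orbit (graver_generators L H)"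
  proof cases
    case 1
    hence "u \<in> orbit H" using graver_basis_nonneg_mem_hilbert_basis[OF lat hb u] by blast
    moreover have "H \<subseteq> graver_generators L H" by (auto simp: graver_generators_def pm_def)
    ultimately show ?thesis using orbit_mono by blast
  next
    case 2
    hence "- u \<in> orbit H"
      using graver_basis_nonneg_mem_hilbert_basis[OF lat hb graver_basis_uminus[OF lat u]] by simp
    hence "u \<in> orbit (uminus ` H)" using uminus_mem_orbit_uminus_image by fastforce
    moreover have "uminus ` H \<subseteq> graver_generators L H" by (auto simp: graver_generators_def pm_def)
    ultimately show ?thesis using orbit_mono by blast
  next
    case 3
    hence "u \<in> orbit {gvec_lattice L}" "(\<lambda>t. gcd_lattice L * \<e> 1 t) \<notin> L"
      using graver_basis_mixed_sign_in_orbit[OF lat si u]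
        graver_basis_mixed_sign_scaled_unitvec_notin[OF lat si u] by blast+
    moreover from this(2) have "{gvec_lattice L} \<subseteq> graver_generators L H"
      by (simp add: graver_generators_def pm_def)
    ultimately show ?thesis using orbit_mono by blast
  qed
qed

theorem theorem4p9:
  fixes L H :: "(nat \<Rightarrow> int) set"
  assumes "is_lattice L" and "sym_invariant L"
    and "finite H"
    and "equivariant_hilbert_basis (L \<inter> nonneg_fsupp) H"
  shows "\<exists>G. finite G \<and> equivariant_graver_basis L G \<and>
           pm H \<subseteq> G \<and>
           G \<subseteq> pm H \<union> {gvec_lattice L, - gvec_lattice L}"
proof (intro exI conjI)
  let ?G = "graver_generators L H"
  have hb: "hilbert_basis (L \<inter> nonneg_fsupp) (orbit H)"
    using assms(4) by (simp add: equivariant_hilbert_basis_def)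
  have "orbit ?G \<subseteq> graver_basis L"
    using orbit_subset_sym_invariant[OF sym_invariant_graver_basis[OF assms(2)]]
      graver_generators_subset_graver_basis[OF assms(1,2) hb] .
  with graver_basis_subset_orbit_graver_generators[OF assms(1,2) hb]
  show "equivariant_graver_basis L ?G" by (simp add: equivariant_graver_basis_def)
  show "finite ?G" using assms(3) by (simp add: graver_generators_def pm_def)
  show "pm H \<subseteq> ?G" "?G \<subseteq> pm H \<union> {gvec_lattice L, - gvec_lattice L}"
    by (auto simp: graver_generators_def pm_def)
qed

end
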